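(* Let $\mathcal{X}$ be a finite nonempty set of types, $n=(n_x)_{x\in\mathcal{X}}$ nonnegative integers with $n_x$ even for every $x$, and $\Phi=(\Phi_{xy})_{x,y\in\mathcal{X}}$ a real matrix with $\Phi_{xy}=\Phi_{yx}$ for all $x,y$. Then a stable roommate matching exists.
   Context: Roommate matching with transferable utility: $n_x$ is the number of individuals of type $x$; a pair of types $\{x,y\}$ (possibly $x=y$) generates joint surplus $\Phi_{xy}$; singles get utility $0$. Feasible roommate matchings: $\mathcal{P}(n)=\{\mu=(\mu_{xy})_{x,y\in\mathcal{X}}:\ \mu_{xy}\in\mathbb{N},\ \mu_{xy}=\mu_{yx},\ 2\mu_{xx}+\sum_{y\neq x}\mu_{xy}\le n_x\ \forall x\}$. Total surplus $S_R(\mu;\Phi)=\sum_x\mu_{xx}\Phi_{xx}+\sum_{x\neq y}\mu_{xy}\Phi_{xy}/2$. An outcome is a pair $(\mu,u)$ with $\mu\in\mathcal{P}(n)$, $u\in\mathbb{R}^{\mathcal{X}}$ and $\sum_x n_xu_x=S_R(\mu;\Phi)$; it is stable if $u_x\ge0$ and $u_x+u_y\ge\Phi_{xy}$ for all $x,y\in\mathcal{X}$. A matching $\mu$ is a stable roommate matching if some $u$ makes $(\mu,u)$ a stable outcome. *)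

theory Defs
  imports Complex_Main
begin

definition feasible_roommate :: "('x::finite \<Rightarrow> nat) \<Rightarrow> ('x \<Rightarrow> 'x \<Rightarrow> nat) \<Rightarrow> bool" where
  "feasible_roommate n mu \<longleftrightarrow>
     (\<forall>x y. mu x y = mu y x) \<and>
     (\<forall>x. 2 * mu x x + (\<Sum>y\<in>UNIV - {x}. mu x y) \<le> n x)"

definition total_surplus_R :: "('x::finite \<Rightarrow> 'x \<Rightarrow> nat) \<Rightarrow> ('x \<Rightarrow> 'x \<Rightarrow> real) \<Rightarrow> real" where
  "total_surplus_R mu Phi =
     (\<Sum>x\<in>UNIV. real (mu x x) * Phi x x) +
     (\<Sum>x\<in>UNIV. \<Sum>y\<in>UNIV - {x}. real (mu x y) * Phi x y / 2)"

definition stable_outcome_R ::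
  "('x::finite \<Rightarrow> nat) \<Rightarrow> ('x \<Rightarrow> 'x \<Rightarrow> real) \<Rightarrow> ('x \<Rightarrow> 'x \<Rightarrow> nat) \<Rightarrow> ('x \<Rightarrow> real) \<Rightarrow> bool" where
  "stable_outcome_R n Phi mu u \<longleftrightarrow>
     feasible_roommate n mu \<and>
     (\<Sum>x\<in>UNIV. real (n x) * u x) = total_surplus_R mu Phi \<and>
     (\<forall>x. 0 \<le> u x) \<and>
     (\<forall>x y. Phi x y \<le> u x + u y)"

definition stable_roommate_matching ::
  "('x::finite \<Rightarrow> nat) \<Rightarrow> ('x \<Rightarrow> 'x \<Rightarrow> real) \<Rightarrow> ('x \<Rightarrow> 'x \<Rightarrow> nat) \<Rightarrow> bool" where
  "stable_roommate_matching n Phi mu \<longleftrightarrow> (\<exists>u. stable_outcome_R n Phi mu u)"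

end

theory Submission
  imports Defs
begin

text \<open>Since n x is even, the individuals of type x can be split into m x = n x / 2 "men" and
  m x "women". Consider the bipartite problem in which a man of type x and a woman of type y
  produce Phi x y. An optimal integral bipartite matching admits no surplus-increasing exchange along a cycle
  of its residual graph; longest-path potentials in that graph are therefore well defined and
  yield dual prices u, v satisfying complementary slackness. Turning each bipartite pair
  into a pair of roommates and paying everybody of type x the average (u x + v x) / 2 gives
  a stable roommate outcome, because Phi is symmetric.\<close>

section \<open>Potentials in graphs without positive cycles\<close>

fun walk_weight :: "('n \<Rightarrow> 'n \<Rightarrow> real) \<Rightarrow> 'n list \<Rightarrow> real" where
  "walk_weight w (a # b # cs) = w a b + walk_weight w (b # cs)"
| "walk_weight w _ = 0"

lemma walk_weight_append:
  "walk_weight w (xs @ y # ys) = walk_weight w (xs @ [y]) + walk_weight w (y # ys)"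
proof (induction xs)
  case (Cons a xs)
  then show ?case by (cases xs) auto
qed simp

lemma walk_weight_snoc: "xs \<noteq> [] \<Longrightarrow> walk_weight w (xs @ [b]) = walk_weight w xs + w (last xs) b"
  by (induction xs rule: induct_list012) auto

lemma walk_weight_eq_sum_list: "walk_weight w xs = sum_list (map2 w xs (tl xs))"
  by (induction w xs rule: walk_weight.induct) auto

lemma successively_iff_list_all2: "successively P xs \<longleftrightarrow> list_all2 P (butlast xs) (tl xs)"
  by (induction xs rule: induct_list012) auto

text \<open>A vertex-disjoint union of directed cycles, encoded as a permutation \<sigma> of a finite
  node set S that moves along edges.\<close>

definition cycle_cover :: "('n \<Rightarrow> 'n \<Rightarrow> bool) \<Rightarrow> 'n set \<Rightarrow> ('n \<Rightarrow> 'n) \<Rightarrow> bool" where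
  "cycle_cover E S \<sigma> \<longleftrightarrow> finite S \<and> \<sigma> ` S \<subseteq> S \<and> inj_on \<sigma> S \<and> (\<forall>a\<in>S. E a (\<sigma> a))"

definition no_positive_cycle :: "('n \<Rightarrow> 'n \<Rightarrow> bool) \<Rightarrow> ('n \<Rightarrow> 'n \<Rightarrow> real) \<Rightarrow> bool" where
  "no_positive_cycle E w \<longleftrightarrow> (\<forall>S \<sigma>. cycle_cover E S \<sigma> \<longrightarrow> (\<Sum>a\<in>S. w a (\<sigma> a)) \<le> 0)"

lemma closed_walk_weight_nonpos:
  assumes "no_positive_cycle E w" and "distinct cs" and "cs \<noteq> []"
    and "successively E (cs @ [hd cs])"
  shows "walk_weight w (cs @ [hd cs]) \<le> 0"
proof -
  define ds where "ds = tl cs @ [hd cs]"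
  \<comment> \<open>\<sigma> sends every node of the cycle to its successor\<close>
  define \<sigma> where "\<sigma> a = the (map_of (zip cs ds) a)" for a
  have "map \<sigma> cs = ds"
    using assms(2,3) by (intro nth_equalityI) (simp_all add: ds_def \<sigma>_def map_of_zip_nth)
  moreover have "set ds = set cs" "distinct ds"
    using assms(2,3) by (cases cs, simp_all add: ds_def)+
  ultimately have perm: "\<sigma> ` set cs = set cs" "inj_on \<sigma> (set cs)"
    by (metis set_map, metis distinct_map)
  have "list_all2 E cs ds"
    using assms(3,4) by (simp add: successively_iff_list_all2 ds_def)
  then have edges: "\<forall>a\<in>set cs. E a (\<sigma> a)"
    by (simp flip: \<open>map \<sigma> cs = ds\<close> add: list.rel_map list_all2_same)
  have "walk_weight w (cs @ [hd cs]) = sum_list (map2 w cs ds)"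
    using assms(3) \<open>map \<sigma> cs = ds\<close>
    by (simp add: walk_weight_eq_sum_list zip_append1 flip: ds_def length_map[of \<sigma> cs])
  also have "\<dots> = (\<Sum>a\<in>set cs. w a (\<sigma> a))"
    using assms(2) map2_map_map[of w id cs \<sigma>]
    by (simp add: sum.distinct_set_conv_list flip: \<open>map \<sigma> cs = ds\<close>)
  also have "\<dots> \<le> 0"
    using assms(1) perm edges unfolding no_positive_cycle_def cycle_cover_def by blast
  finally show ?thesis .
qed

definition simple_walks :: "('n \<Rightarrow> 'n \<Rightarrow> bool) \<Rightarrow> 'n list set" where
  "simple_walks E = {cs. cs \<noteq> [] \<and> distinct cs \<and> successively E cs}"

lemma finite_simple_walks: "finite (simple_walks (E :: 'n::finite \<Rightarrow> 'n \<Rightarrow> bool))"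
  by (rule finite_subset[OF _ finite_subset_distinct[of UNIV]]) (auto simp: simple_walks_def)

text \<open>If appending the edge creates a cycle, cutting that cycle off yields a simple walk to
  the same endpoint that is at least as heavy.\<close>

lemma simple_walk_extend:
  assumes "no_positive_cycle E w" and "cs \<in> simple_walks E" and "E (last cs) b"
  shows "\<exists>ds\<in>simple_walks E. last ds = b \<and> walk_weight w cs + w (last cs) b \<le> walk_weight w ds"
proof (cases "b \<in> set cs")
  case False
  then have "cs @ [b] \<in> simple_walks E"
    using assms(2,3) by (simp add: simple_walks_def successively_append_iff)
  moreover have "walk_weight w (cs @ [b]) = walk_weight w cs + w (last cs) b"
    using assms(2) by (simp add: simple_walks_def walk_weight_snoc)
  ultimately show ?thesis by (intro bexI[of _ "cs @ [b]"]) simp_all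
next
  case True
  then obtain xs ys where split: "cs = xs @ b # ys" by (meson split_list)
  have "xs @ [b] \<in> simple_walks E" "b # ys \<in> simple_walks E"
    using assms(2) by (simp_all add: simple_walks_def split successively_append_iff)
  moreover have "successively E ((b # ys) @ [b])"
    using \<open>b # ys \<in> simple_walks E\<close> assms(3) unfolding successively_append_iff
    by (simp add: simple_walks_def split)
  ultimately have "walk_weight w ((b # ys) @ [hd (b # ys)]) \<le> 0"
    by (intro closed_walk_weight_nonpos[OF assms(1)]) (simp_all add: simple_walks_def)
  moreover have "walk_weight w cs + w (last cs) b = walk_weight w (xs @ [b]) + walk_weight w ((b # ys) @ [b])"
    using split walk_weight_append[of w xs b "ys @ [b]"] walk_weight_snoc[of cs w b] by simp
  ultimately show ?thesis
    using \<open>xs @ [b] \<in> simple_walks E\<close> by (intro bexI[of _ "xs @ [b]"]) simp_all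
qed

lemma potential_if_no_positive_cycle:
  fixes E :: "'n::finite \<Rightarrow> 'n \<Rightarrow> bool"
  assumes "no_positive_cycle E w"
  shows "\<exists>p. \<forall>a b. E a b \<longrightarrow> p a + w a b \<le> p b"
proof -
  define W where "W b = walk_weight w ` {cs \<in> simple_walks E. last cs = b}" for b
  have fin: "finite (W b)" for b
    using finite_simple_walks[of E] by (simp add: W_def)
  have "[b] \<in> simple_walks E" for b
    by (simp add: simple_walks_def)
  then have nonempty: "W b \<noteq> {}" for b
    unfolding W_def by force
  have "Max (W a) + w a b \<le> Max (W b)" if "E a b" for a b
  proof -
    obtain cs where cs: "cs \<in> simple_walks E" "last cs = a" "walk_weight w cs = Max (W a)"
      using Max_in[OF fin nonempty, of a] by (auto simp: W_def)
    have "E (last cs) b" using that cs(2) by simp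
    then obtain ds where "ds \<in> simple_walks E" "last ds = b"
      and "walk_weight w cs + w (last cs) b \<le> walk_weight w ds"
      using simple_walk_extend[OF assms cs(1)] by blast
    moreover have "walk_weight w ds \<le> Max (W b)"
      using fin \<open>ds \<in> simple_walks E\<close> \<open>last ds = b\<close> by (intro Max_ge) (auto simp: W_def)
    ultimately show ?thesis using cs(2,3) by simp
  qed
  then show ?thesis by (intro exI[of _ "\<lambda>b. Max (W b)"]) blast
qed

section \<open>The bipartite problem and its dual\<close>

lemma sum_exchange_le:
  fixes f g :: "'a \<Rightarrow> nat"
  assumes "finite A" and "sum f A \<le> c"
    and exchange: "\<And>a. a \<in> A \<Longrightarrow> g a + of_bool (rem a) = f a + of_bool (add a)"
    and add_unique: "\<And>a b. a \<in> A \<Longrightarrow> b \<in> A \<Longrightarrow> add a \<Longrightarrow> add b \<Longrightarrow> a = b"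
    and add_room: "\<And>a. a \<in> A \<Longrightarrow> add a \<Longrightarrow> sum f A < c \<or> (\<exists>b\<in>A. rem b)"
  shows "sum g A \<le> c"
proof -
  have balance: "sum g A + (\<Sum>a\<in>A. of_bool (rem a)) = sum f A + (\<Sum>a\<in>A. of_bool (add a))"
    using exchange by (simp add: sum.distrib[symmetric])
  show ?thesis
  proof (cases "\<exists>a\<in>A. add a")
    case False
    then show ?thesis using balance assms(2) by simp
  next
    case True
    then obtain a where a: "a \<in> A" "add a" by blast
    have "(\<Sum>b\<in>A. of_bool (add b) :: nat) = (\<Sum>b\<in>A. if b = a then 1 else 0)"
      using a add_unique by (intro sum.cong) auto
    then have "(\<Sum>b\<in>A. of_bool (add b) :: nat) = 1"
      using a assms(1) by simp
    moreover have "sum f A < c \<or> (\<Sum>a\<in>A. of_bool (rem a) :: nat) \<ge> 1"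
      using add_room[OF a] member_le_sum[of _ A "\<lambda>b. of_bool (rem b) :: nat"] assms(1) by fastforce
    ultimately show ?thesis using balance assms(2) by linarith
  qed
qed

lemma sum_of_bool_delta:
  fixes f :: "'a::finite \<Rightarrow> 'b::semiring_1"
  shows "(\<Sum>x\<in>UNIV. of_bool (c = x) * f x) = f c"
proof -
  have "UNIV \<inter> {x. c = x} = {c}" by auto
  then show ?thesis by simp
qed

lemma sum_of_bool_delta_conj:
  assumes "finite S"
  shows "(\<Sum>a\<in>S. of_bool (a = c \<and> P a) :: real) = of_bool (c \<in> S \<and> P c)"
proof -
  have "(\<Sum>a\<in>S. of_bool (a = c \<and> P a) :: real) = (\<Sum>a\<in>S. if a = c then of_bool (P a) else 0)"
    by (intro sum.cong) auto
  also have "\<dots> = of_bool (c \<in> S \<and> P c)"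
    using assms by (simp add: sum.delta')
  finally show ?thesis .
qed

definition bipartite_feasible :: "('x::finite \<Rightarrow> nat) \<Rightarrow> ('x \<Rightarrow> 'x \<Rightarrow> nat) \<Rightarrow> bool" where
  "bipartite_feasible m \<nu> \<longleftrightarrow> (\<forall>x. (\<Sum>y\<in>UNIV. \<nu> x y) \<le> m x) \<and> (\<forall>y. (\<Sum>x\<in>UNIV. \<nu> x y) \<le> m y)"

definition bipartite_surplus :: "('x::finite \<Rightarrow> 'x \<Rightarrow> nat) \<Rightarrow> ('x \<Rightarrow> 'x \<Rightarrow> real) \<Rightarrow> real" where
  "bipartite_surplus \<nu> Phi = (\<Sum>x\<in>UNIV. \<Sum>y\<in>UNIV. real (\<nu> x y) * Phi x y)"

lemma finite_bipartite_feasible: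
  fixes m :: "'x::finite \<Rightarrow> nat"
  shows "finite {\<nu>. bipartite_feasible m \<nu>}"
proof -
  define K where "K = (\<Sum>x\<in>UNIV. m x)"
  have "\<nu> x y \<le> K" if "bipartite_feasible m \<nu>" for \<nu> x y
  proof -
    have "\<nu> x y \<le> (\<Sum>y\<in>UNIV. \<nu> x y)" by (rule member_le_sum) auto
    also have "\<dots> \<le> m x" using that by (simp add: bipartite_feasible_def)
    also have "m x \<le> K" unfolding K_def by (rule member_le_sum) auto
    finally show ?thesis .
  qed
  then have "{\<nu>. bipartite_feasible m \<nu>} \<subseteq> {\<nu>. \<forall>x y. \<nu> x y \<le> K}"
    by blast
  moreover have "finite {\<nu> :: 'x \<Rightarrow> 'x \<Rightarrow> nat. \<forall>x y. \<nu> x y \<le> K}"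
    using finite_set_of_finite_funs[of "UNIV :: 'x set" "{g :: 'x \<Rightarrow> nat. \<forall>y. g y \<in> {..K}}"]
      finite_set_of_finite_funs[of "UNIV :: 'x set" "{..K}"] by simp
  ultimately show ?thesis by (rule finite_subset)
qed

lemma bipartite_optimum_exists:
  fixes m :: "'x::finite \<Rightarrow> nat"
  obtains \<nu> where "bipartite_feasible m \<nu>"
    and "\<And>\<nu>'. bipartite_feasible m \<nu>' \<Longrightarrow> bipartite_surplus \<nu>' Phi \<le> bipartite_surplus \<nu> Phi"
proof -
  define F where "F = (\<lambda>\<nu>. bipartite_surplus \<nu> Phi) ` {\<nu>. bipartite_feasible m \<nu>}"
  have "bipartite_feasible m (\<lambda>_ _. 0)" by (simp add: bipartite_feasible_def)
  then have "finite F" "F \<noteq> {}"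
    using finite_bipartite_feasible[of m] by (auto simp: F_def)
  then have "Max F \<in> F" by (rule Max_in)
  then obtain \<nu> where \<nu>: "bipartite_feasible m \<nu>" "bipartite_surplus \<nu> Phi = Max F"
    unfolding F_def by auto
  show ?thesis
  proof (rule that)
    show "bipartite_feasible m \<nu>" by (fact \<nu>(1))
  next
    fix \<nu>' assume "bipartite_feasible m \<nu>'"
    then have "bipartite_surplus \<nu>' Phi \<in> F" by (simp add: F_def)
    then show "bipartite_surplus \<nu>' Phi \<le> bipartite_surplus \<nu> Phi"
      using Max_ge[OF \<open>finite F\<close>] \<nu>(2) by simp
  qed
qed

text \<open>The residual graph of a bipartite matching \<nu>: Row x and Col y stand for men of type x and
  women of type y, Single for being unmatched. Following Col y \<rightarrow> Row x adds a pair (x, y),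
  following Row x \<rightarrow> Col y removes one; the edges Row x \<rightarrow> Single and Single \<rightarrow> Col y let one
  more man of type x or woman of type y be matched and exist only if there is room. The weight
  of a cycle cover is the change of surplus caused by the exchange it describes.\<close>

datatype 'x node = Single | Row 'x | Col 'x

instance node :: (finite) finite
proof
  have "a \<in> insert Single (range Row \<union> range Col)" for a :: "'a node"
    by (cases a) auto
  then have univ: "(UNIV :: 'a node set) = insert Single (range Row \<union> range Col)"
    by blast
  show "finite (UNIV :: 'a node set)"
    by (subst univ) simp
qed

fun residual_edge :: "('x::finite \<Rightarrow> nat) \<Rightarrow> ('x \<Rightarrow> 'x \<Rightarrow> nat) \<Rightarrow> 'x node \<Rightarrow> 'x node \<Rightarrow> bool" where
  "residual_edge m \<nu> (Col y) (Row x) = True"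
| "residual_edge m \<nu> (Row x) (Col y) = (0 < \<nu> x y)"
| "residual_edge m \<nu> Single (Row x) = True"
| "residual_edge m \<nu> (Row x) Single = ((\<Sum>y\<in>UNIV. \<nu> x y) < m x)"
| "residual_edge m \<nu> (Col y) Single = True"
| "residual_edge m \<nu> Single (Col y) = ((\<Sum>x\<in>UNIV. \<nu> x y) < m y)"
| "residual_edge m \<nu> _ _ = False"

fun residual_weight :: "('x \<Rightarrow> 'x \<Rightarrow> real) \<Rightarrow> 'x node \<Rightarrow> 'x node \<Rightarrow> real" where
  "residual_weight Phi (Col y) (Row x) = Phi x y"
| "residual_weight Phi (Row x) (Col y) = - Phi x y"
| "residual_weight Phi _ _ = 0"

\<comment> \<open>The truncated subtraction is exact: a pair is only removed along a residual edge,
  which requires it to be present.\<close>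
definition augment :: "'x node set \<Rightarrow> ('x node \<Rightarrow> 'x node) \<Rightarrow> ('x \<Rightarrow> 'x \<Rightarrow> nat) \<Rightarrow> 'x \<Rightarrow> 'x \<Rightarrow> nat" where
  "augment S \<sigma> \<nu> x y =
     \<nu> x y + of_bool (Col y \<in> S \<and> \<sigma> (Col y) = Row x) - of_bool (Row x \<in> S \<and> \<sigma> (Row x) = Col y)"

lemma augment_exchange:
  assumes "cycle_cover (residual_edge m \<nu>) S \<sigma>"
  shows "augment S \<sigma> \<nu> x y + of_bool (Row x \<in> S \<and> \<sigma> (Row x) = Col y)
           = \<nu> x y + of_bool (Col y \<in> S \<and> \<sigma> (Col y) = Row x)"
proof -
  have "0 < \<nu> x y" if "Row x \<in> S" "\<sigma> (Row x) = Col y"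
  proof -
    have "residual_edge m \<nu> (Row x) (\<sigma> (Row x))"
      using assms that(1) by (simp add: cycle_cover_def)
    then show ?thesis using that(2) by simp
  qed
  then show ?thesis by (simp add: augment_def)
qed

lemma residual_weight_eq_sum:
  fixes Phi :: "'x::finite \<Rightarrow> 'x \<Rightarrow> real"
  shows "residual_weight Phi a b =
     (\<Sum>x\<in>UNIV. \<Sum>y\<in>UNIV. (of_bool (a = Col y \<and> b = Row x) - of_bool (a = Row x \<and> b = Col y)) * Phi x y)"
  by (cases a; cases b)
    (simp_all add: left_diff_distrib sum_subtractf of_bool_conj mult.assoc sum_negf sum_of_bool_delta
      flip: sum_distrib_left)

lemma augment_surplus:
  fixes \<nu> :: "'x::finite \<Rightarrow> 'x \<Rightarrow> nat"
  assumes "cycle_cover (residual_edge m \<nu>) S \<sigma>"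
  shows "bipartite_surplus (augment S \<sigma> \<nu>) Phi
           = bipartite_surplus \<nu> Phi + (\<Sum>a\<in>S. residual_weight Phi a (\<sigma> a))"
proof -
  define coeff where "coeff a x y =
    (of_bool (a = Col y \<and> \<sigma> a = Row x) - of_bool (a = Row x \<and> \<sigma> a = Col y) :: real)" for a x y
  have "finite S" using assms by (simp add: cycle_cover_def)
  then have "real (augment S \<sigma> \<nu> x y) = real (\<nu> x y) + (\<Sum>a\<in>S. coeff a x y)" for x y
    using arg_cong[OF augment_exchange[OF assms, of x y], of real]
    by (simp add: coeff_def sum_subtractf sum_of_bool_delta_conj del: sum_of_bool_eq)
  then have "bipartite_surplus (augment S \<sigma> \<nu>) Phi
      = bipartite_surplus \<nu> Phi + (\<Sum>x\<in>UNIV. \<Sum>y\<in>UNIV. \<Sum>a\<in>S. coeff a x y * Phi x y)"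
    by (simp add: bipartite_surplus_def distrib_right sum.distrib sum_distrib_right)
  also have "(\<Sum>x\<in>UNIV. \<Sum>y\<in>UNIV. \<Sum>a\<in>S. coeff a x y * Phi x y)
      = (\<Sum>x\<in>UNIV. \<Sum>a\<in>S. \<Sum>y\<in>UNIV. coeff a x y * Phi x y)"
    by (intro sum.cong refl) (rule sum.swap)
  also have "\<dots> = (\<Sum>a\<in>S. \<Sum>x\<in>UNIV. \<Sum>y\<in>UNIV. coeff a x y * Phi x y)"
    by (rule sum.swap)
  also have "\<dots> = (\<Sum>a\<in>S. residual_weight Phi a (\<sigma> a))"
    by (simp only: residual_weight_eq_sum coeff_def)
  finally show ?thesis .
qed

lemma augment_feasible:
  fixes \<nu> :: "'x::finite \<Rightarrow> 'x \<Rightarrow> nat"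
  assumes feasible: "bipartite_feasible m \<nu>" and cycle: "cycle_cover (residual_edge m \<nu>) S \<sigma>"
  shows "bipartite_feasible m (augment S \<sigma> \<nu>)"
proof -
  have into: "\<sigma> ` S \<subseteq> S" and inj: "inj_on \<sigma> S" and "finite S"
    and edge: "\<And>a. a \<in> S \<Longrightarrow> residual_edge m \<nu> a (\<sigma> a)"
    using cycle unfolding cycle_cover_def by auto
  have onto: "\<sigma> ` S = S" using endo_inj_surj[OF \<open>finite S\<close> into inj] .
  define added where "added x y \<longleftrightarrow> Col y \<in> S \<and> \<sigma> (Col y) = Row x" for x y
  define removed where "removed x y \<longleftrightarrow> Row x \<in> S \<and> \<sigma> (Row x) = Col y" for x y
  have exchange: "augment S \<sigma> \<nu> x y + of_bool (removed x y) = \<nu> x y + of_bool (added x y)" for x y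
    unfolding added_def removed_def by (rule augment_exchange[OF cycle])
  have "(\<Sum>y\<in>UNIV. augment S \<sigma> \<nu> x y) \<le> m x" for x
  proof (rule sum_exchange_le[where rem = "removed x" and add = "added x"])
    show "(\<Sum>y\<in>UNIV. \<nu> x y) \<le> m x"
      using feasible by (simp add: bipartite_feasible_def)
    show "augment S \<sigma> \<nu> x y + of_bool (removed x y) = \<nu> x y + of_bool (added x y)" for y
      by (rule exchange)
    show "y = y'" if "added x y" "added x y'" for y y'
      using that inj_onD[OF inj, of "Col y" "Col y'"] by (simp add: added_def)
    show "(\<Sum>y\<in>UNIV. \<nu> x y) < m x \<or> (\<exists>y'\<in>UNIV. removed x y')" if "added x y" for y
    proof -
      have "Row x \<in> S"
        using that into unfolding added_def by (metis image_subset_iff)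
      then have "residual_edge m \<nu> (Row x) (\<sigma> (Row x))" by (rule edge)
      then show ?thesis
        using \<open>Row x \<in> S\<close> by (cases "\<sigma> (Row x)") (simp_all add: removed_def)
    qed
  qed simp
  moreover have "(\<Sum>x\<in>UNIV. augment S \<sigma> \<nu> x y) \<le> m y" for y
  proof (rule sum_exchange_le[where rem = "\<lambda>x. removed x y" and add = "\<lambda>x. added x y"])
    show "(\<Sum>x\<in>UNIV. \<nu> x y) \<le> m y"
      using feasible by (simp add: bipartite_feasible_def)
    show "augment S \<sigma> \<nu> x y + of_bool (removed x y) = \<nu> x y + of_bool (added x y)" for x
      by (rule exchange)
    show "x = x'" if "added x y" "added x' y" for x x'
      using that by (simp add: added_def)
    show "(\<Sum>x\<in>UNIV. \<nu> x y) < m y \<or> (\<exists>x'\<in>UNIV. removed x' y)" if "added x y" for x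
    proof -
      have "Col y \<in> S" using that by (simp add: added_def)
      then obtain a where "a \<in> S" "\<sigma> a = Col y"
        using onto by (metis imageE)
      then have "residual_edge m \<nu> a (Col y)"
        using edge by metis
      then show ?thesis
        using \<open>a \<in> S\<close> \<open>\<sigma> a = Col y\<close> by (cases a) (auto simp: removed_def)
    qed
  qed simp
  ultimately show ?thesis by (simp add: bipartite_feasible_def)
qed

lemma optimal_no_positive_residual_cycle:
  fixes \<nu> :: "'x::finite \<Rightarrow> 'x \<Rightarrow> nat"
  assumes "bipartite_feasible m \<nu>"
    and "\<And>\<nu>'. bipartite_feasible m \<nu>' \<Longrightarrow> bipartite_surplus \<nu>' Phi \<le> bipartite_surplus \<nu> Phi"
  shows "no_positive_cycle (residual_edge m \<nu>) (residual_weight Phi)"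
  unfolding no_positive_cycle_def
proof (intro allI impI)
  fix S \<sigma> assume cycle: "cycle_cover (residual_edge m \<nu>) S \<sigma>"
  have "bipartite_surplus (augment S \<sigma> \<nu>) Phi \<le> bipartite_surplus \<nu> Phi"
    by (rule assms(2)[OF augment_feasible[OF assms(1) cycle]])
  then show "(\<Sum>a\<in>S. residual_weight Phi a (\<sigma> a)) \<le> 0"
    using augment_surplus[OF cycle, of Phi] by simp
qed

lemma bipartite_surplus_eq_dual_value:
  fixes \<nu> :: "'x::finite \<Rightarrow> 'x \<Rightarrow> nat"
  assumes feasible: "bipartite_feasible m \<nu>"
    and tight: "\<And>x y. 0 < \<nu> x y \<Longrightarrow> Phi x y = u x + v y"
    and row_slack: "\<And>x. (\<Sum>y\<in>UNIV. \<nu> x y) < m x \<Longrightarrow> u x = 0"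
    and col_slack: "\<And>y. (\<Sum>x\<in>UNIV. \<nu> x y) < m y \<Longrightarrow> v y = 0"
  shows "bipartite_surplus \<nu> Phi = (\<Sum>x\<in>UNIV. real (m x) * (u x + v x))"
proof -
  have rows: "u x * real (\<Sum>y\<in>UNIV. \<nu> x y) = u x * real (m x)" for x
  proof (cases "(\<Sum>y\<in>UNIV. \<nu> x y) < m x")
    case False
    moreover have "(\<Sum>y\<in>UNIV. \<nu> x y) \<le> m x"
      using feasible by (simp add: bipartite_feasible_def)
    ultimately have "(\<Sum>y\<in>UNIV. \<nu> x y) = m x" by simp
    then show ?thesis by (simp only:)
  qed (simp add: row_slack)
  have cols: "v y * real (\<Sum>x\<in>UNIV. \<nu> x y) = v y * real (m y)" for y
  proof (cases "(\<Sum>x\<in>UNIV. \<nu> x y) < m y")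
    case False
    moreover have "(\<Sum>x\<in>UNIV. \<nu> x y) \<le> m y"
      using feasible by (simp add: bipartite_feasible_def)
    ultimately have "(\<Sum>x\<in>UNIV. \<nu> x y) = m y" by simp
    then show ?thesis by (simp only:)
  qed (simp add: col_slack)
  have "bipartite_surplus \<nu> Phi = (\<Sum>x\<in>UNIV. \<Sum>y\<in>UNIV. real (\<nu> x y) * (u x + v y))"
    unfolding bipartite_surplus_def
  proof (intro sum.cong refl)
    fix x y
    show "real (\<nu> x y) * Phi x y = real (\<nu> x y) * (u x + v y)"
      by (cases "\<nu> x y = 0") (simp_all add: tight)
  qed
  also have "\<dots> = (\<Sum>x\<in>UNIV. \<Sum>y\<in>UNIV. u x * real (\<nu> x y))
      + (\<Sum>x\<in>UNIV. \<Sum>y\<in>UNIV. v y * real (\<nu> x y))"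
    by (simp add: algebra_simps sum.distrib)
  also have "(\<Sum>x\<in>UNIV. \<Sum>y\<in>UNIV. v y * real (\<nu> x y))
      = (\<Sum>y\<in>UNIV. \<Sum>x\<in>UNIV. v y * real (\<nu> x y))"
    by (rule sum.swap)
  also have "(\<Sum>x\<in>UNIV. \<Sum>y\<in>UNIV. u x * real (\<nu> x y)) + (\<Sum>y\<in>UNIV. \<Sum>x\<in>UNIV. v y * real (\<nu> x y))
      = (\<Sum>x\<in>UNIV. u x * real (m x)) + (\<Sum>y\<in>UNIV. v y * real (m y))"
    by (simp only: rows cols of_nat_sum[symmetric] sum_distrib_left[symmetric])
  also have "\<dots> = (\<Sum>x\<in>UNIV. real (m x) * (u x + v x))"
    by (simp add: algebra_simps sum.distrib)
  finally show ?thesis .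
qed

lemma bipartite_duality:
  fixes m :: "'x::finite \<Rightarrow> nat" and Phi :: "'x \<Rightarrow> 'x \<Rightarrow> real"
  obtains \<nu> u v where "bipartite_feasible m \<nu>"
    and "\<And>x. 0 \<le> u x" and "\<And>y. 0 \<le> v y" and "\<And>x y. Phi x y \<le> u x + v y"
    and "bipartite_surplus \<nu> Phi = (\<Sum>x\<in>UNIV. real (m x) * (u x + v x))"
proof -
  obtain \<nu> where feasible: "bipartite_feasible m \<nu>"
    and optimal: "\<And>\<nu>'. bipartite_feasible m \<nu>' \<Longrightarrow> bipartite_surplus \<nu>' Phi \<le> bipartite_surplus \<nu> Phi"
    using bipartite_optimum_exists by blast
  obtain p where p: "\<And>a b. residual_edge m \<nu> a b \<Longrightarrow> p a + residual_weight Phi a b \<le> p b"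
    using potential_if_no_positive_cycle[OF optimal_no_positive_residual_cycle[OF feasible optimal]]
    by blast
  \<comment> \<open>The unconditional residual edges give dual feasibility, the conditional ones
    complementary slackness.\<close>
  define u where "u x = p (Row x) - p Single" for x
  define v where "v y = p Single - p (Col y)" for y
  show ?thesis
  proof (rule that[OF feasible])
    show "0 \<le> u x" for x using p[of Single "Row x"] by (simp add: u_def)
    show "0 \<le> v y" for y using p[of "Col y" Single] by (simp add: v_def)
    show "Phi x y \<le> u x + v y" for x y using p[of "Col y" "Row x"] by (simp add: u_def v_def)
    have "Phi x y = u x + v y" if "0 < \<nu> x y" for x y
      using p[of "Col y" "Row x"] p[of "Row x" "Col y"] that by (simp add: u_def v_def)
    moreover have "u x = 0" if "(\<Sum>y\<in>UNIV. \<nu> x y) < m x" for x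
      using p[of Single "Row x"] p[of "Row x" Single] that by (simp add: u_def)
    moreover have "v y = 0" if "(\<Sum>x\<in>UNIV. \<nu> x y) < m y" for y
      using p[of "Col y" Single] p[of Single "Col y"] that by (simp add: v_def)
    ultimately show "bipartite_surplus \<nu> Phi = (\<Sum>x\<in>UNIV. real (m x) * (u x + v x))"
      by (rule bipartite_surplus_eq_dual_value[OF feasible])
  qed
qed

section \<open>From bipartite to roommate matchings\<close>

definition roommate_of :: "('x \<Rightarrow> 'x \<Rightarrow> nat) \<Rightarrow> 'x \<Rightarrow> 'x \<Rightarrow> nat" where
  "roommate_of \<nu> x y = (if x = y then \<nu> x x else \<nu> x y + \<nu> y x)"

lemma feasible_roommate_of:
  fixes \<nu> :: "'x::finite \<Rightarrow> 'x \<Rightarrow> nat"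
  assumes "bipartite_feasible m \<nu>"
  shows "feasible_roommate (\<lambda>x. 2 * m x) (roommate_of \<nu>)"
  unfolding feasible_roommate_def
proof (intro conjI allI)
  fix x y
  show "roommate_of \<nu> x y = roommate_of \<nu> y x" by (simp add: roommate_of_def)
next
  fix x
  have "2 * roommate_of \<nu> x x + (\<Sum>y\<in>UNIV - {x}. roommate_of \<nu> x y)
      = (\<nu> x x + \<nu> x x) + (\<Sum>y\<in>UNIV - {x}. \<nu> x y + \<nu> y x)"
    by (simp add: roommate_of_def)
  also have "\<dots> = (\<Sum>y\<in>UNIV. \<nu> x y) + (\<Sum>y\<in>UNIV. \<nu> y x)"
    by (simp add: sum.remove[of UNIV x] sum.distrib)
  also have "\<dots> \<le> 2 * m x"
    using assms unfolding bipartite_feasible_def by (metis add_le_mono mult_2)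
  finally show "2 * roommate_of \<nu> x x + (\<Sum>y\<in>UNIV - {x}. roommate_of \<nu> x y) \<le> 2 * m x" .
qed

lemma total_surplus_R_roommate_of:
  fixes \<nu> :: "'x::finite \<Rightarrow> 'x \<Rightarrow> nat"
  assumes symmetric: "\<And>x y. Phi x y = Phi y x"
  shows "total_surplus_R (roommate_of \<nu>) Phi = bipartite_surplus \<nu> Phi"
proof -
  define g where "g x y = real (\<nu> x y + \<nu> y x) * Phi x y / 2" for x y
  have off_diagonal: "(\<Sum>y\<in>UNIV - {x}. real (roommate_of \<nu> x y) * Phi x y / 2)
      = (\<Sum>y\<in>UNIV. g x y) - real (\<nu> x x) * Phi x x" for x
  proof -
    have "(\<Sum>y\<in>UNIV - {x}. real (roommate_of \<nu> x y) * Phi x y / 2) = (\<Sum>y\<in>UNIV - {x}. g x y)"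
      by (rule sum.cong) (auto simp: roommate_of_def g_def)
    moreover have "(\<Sum>y\<in>UNIV. g x y) = g x x + (\<Sum>y\<in>UNIV - {x}. g x y)"
      by (simp add: sum.remove[of UNIV x])
    ultimately show ?thesis by (simp add: g_def)
  qed
  have "total_surplus_R (roommate_of \<nu>) Phi
      = (\<Sum>x\<in>UNIV. real (\<nu> x x) * Phi x x) + (\<Sum>x\<in>UNIV. (\<Sum>y\<in>UNIV. g x y) - real (\<nu> x x) * Phi x x)"
    unfolding total_surplus_R_def off_diagonal by (simp add: roommate_of_def)
  also have "\<dots> = (\<Sum>x\<in>UNIV. \<Sum>y\<in>UNIV. g x y)"
    by (simp add: sum_subtractf)
  also have "\<dots> = (bipartite_surplus \<nu> Phi + (\<Sum>x\<in>UNIV. \<Sum>y\<in>UNIV. real (\<nu> y x) * Phi y x)) / 2"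
    by (simp add: g_def bipartite_surplus_def symmetric sum.distrib algebra_simps flip: sum_divide_distrib)
  also have "(\<Sum>x\<in>UNIV. \<Sum>y\<in>UNIV. real (\<nu> y x) * Phi y x) = bipartite_surplus \<nu> Phi"
    unfolding bipartite_surplus_def by (rule sum.swap)
  finally show ?thesis by simp
qed

lemma stable_outcome_R_roommate_of:
  fixes \<nu> :: "'x::finite \<Rightarrow> 'x \<Rightarrow> nat"
  assumes symmetric: "\<And>x y. Phi x y = Phi y x"
    and feasible: "bipartite_feasible m \<nu>"
    and "\<And>x. 0 \<le> u x" and "\<And>y. 0 \<le> v y" and dual: "\<And>x y. Phi x y \<le> u x + v y"
    and surplus: "bipartite_surplus \<nu> Phi = (\<Sum>x\<in>UNIV. real (m x) * (u x + v x))"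
  shows "stable_outcome_R (\<lambda>x. 2 * m x) Phi (roommate_of \<nu>) (\<lambda>x. (u x + v x) / 2)"
  unfolding stable_outcome_R_def
proof (intro conjI allI)
  show "feasible_roommate (\<lambda>x. 2 * m x) (roommate_of \<nu>)"
    by (rule feasible_roommate_of[OF feasible])
  show "(\<Sum>x\<in>UNIV. real (2 * m x) * ((u x + v x) / 2)) = total_surplus_R (roommate_of \<nu>) Phi"
    using symmetric by (simp add: total_surplus_R_roommate_of surplus)
  show "0 \<le> (u x + v x) / 2" for x
    using \<open>0 \<le> u x\<close> \<open>0 \<le> v x\<close> by simp
  show "Phi x y \<le> (u x + v x) / 2 + (u y + v y) / 2" for x y
    using dual[of x y] dual[of y x] symmetric[of x y] by (simp add: field_simps)
qed

theorem corollary1: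
  fixes n :: "'x::finite \<Rightarrow> nat" and Phi :: "'x \<Rightarrow> 'x \<Rightarrow> real"
  assumes "\<forall>x. even (n x)"
    and "\<forall>x y. Phi x y = Phi y x"
  shows "\<exists>mu. stable_roommate_matching n Phi mu"
proof -
  define m where "m x = n x div 2" for x
  have n_eq: "n = (\<lambda>x. 2 * m x)"
    using assms(1) by (auto simp: m_def)
  obtain \<nu> u v where "bipartite_feasible m \<nu>"
    and "\<And>x. 0 \<le> u x" and "\<And>y. 0 \<le> v y" and "\<And>x y. Phi x y \<le> u x + v y"
    and "bipartite_surplus \<nu> Phi = (\<Sum>x\<in>UNIV. real (m x) * (u x + v x))"
    using bipartite_duality by blast
  then have "stable_outcome_R n Phi (roommate_of \<nu>) (\<lambda>x. (u x + v x) / 2)"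
    unfolding n_eq using assms(2) by (intro stable_outcome_R_roommate_of) simp_all
  then show ?thesis
    unfolding stable_roommate_matching_def by blast
qed

end
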